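(* Let $d\in\mathbb{R}^m$ with $d>0$, let $\ell$ be a certified lower bound for $A^\top x\le u$ with certificate matrix $\Lambda$, and suppose $f(d,\ell)=1$. Let $i\in\{1,\dots,m\}$, set $L_i:=a_i^\top y(d,\ell)-\gamma_i(d,\ell)$, and define $$\hat\lambda_i:=\gamma_i(d,\ell)\,D\,t(d,\ell)-DA^\top B(d)^{-1}a_i,\qquad \tilde\lambda_i:=\Lambda\hat\lambda_i^-+\hat\lambda_i^+ .$$ Then $A\tilde\lambda_i=-a_i$, $\tilde\lambda_i\ge 0$ and $-\tilde\lambda_i^\top u\ge L_i$; i.e., $L_i$ is a certified lower bound on constraint $i$ with certificate $\tilde\lambda_i$.
   Context: Standing assumption: $A=[a_1|\cdots|a_m]\in\mathbb{R}^{n\times m}$ has columns of unit Euclidean norm and $\{A\lambda:\lambda\ge0\}=\mathbb{R}^n$; $u\in\mathbb{R}^m$. For $d\in\mathbb{R}^m$, $D=\mathrm{diag}(d)$. For $d>0$, $\ell\in\mathbb{R}^m$: $r(\ell)=\tfrac12(u+\ell)$, $v(\ell)=\tfrac12(u-\ell)$, $B(d)=ADA^\top$, $y(d,\ell)=B(d)^{-1}ADr(\ell)$, $t(d,\ell)=A^\top y(d,\ell)-r(\ell)$, $f(d,\ell)=v(\ell)^\top Dv(\ell)-t(d,\ell)^\top Dt(d,\ell)$, and when $f(d,\ell)>0$, $\gamma_i(d,\ell)=\sqrt{f(d,\ell)\,a_i^\top B(d)^{-1}a_i}$. A scalar $\ell_i$ is a certified lower bound on constraint $i$ with certificate $\lambda_i\in\mathbb{R}^m$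 if $A\lambda_i=-a_i$, $\lambda_i\ge0$, $-\lambda_i^\top u\ge\ell_i$. A vector $\ell$ is a certified lower bound with certificate matrix $\Lambda\in\mathbb{R}^{m\times m}$ if $A\Lambda=-A$, $\Lambda\ge0$ entrywise, $-\Lambda^\top u\ge\ell$. For a vector $w$, $w^+,w^-\ge0$ are its componentwise positive and negative parts, $w=w^+-w^-$. *)

theory Defs
  imports "HOL-Analysis.Analysis"
begin

text \<open>A :: real^'m^'n is an n x m matrix; its i-th column is a_i = column i A.\<close>

definition diagm :: "real^'m \<Rightarrow> real^'m^'m" where
  "diagm d = (\<chi> i j. if i = j then d $ i else 0)"

definition pospart :: "real^'m \<Rightarrow> real^'m" where
  "pospart w = (\<chi> i. max (w $ i) 0)"

definition negpart :: "real^'m \<Rightarrow> real^'m" where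
  "negpart w = (\<chi> i. max (- (w $ i)) 0)"

definition standing_assm :: "real^'m^'n \<Rightarrow> bool" where
  "standing_assm A \<longleftrightarrow> (\<forall>i. norm (column i A) = 1) \<and>
     {A *v lam | lam. \<forall>j. 0 \<le> lam $ j} = UNIV"

definition rvec :: "real^'m \<Rightarrow> real^'m \<Rightarrow> real^'m" where
  "rvec u l = (1/2) *\<^sub>R (u + l)"

definition vvec :: "real^'m \<Rightarrow> real^'m \<Rightarrow> real^'m" where
  "vvec u l = (1/2) *\<^sub>R (u - l)"

definition Bmat :: "real^'m^'n \<Rightarrow> real^'m \<Rightarrow> real^'n^'n" where
  "Bmat A d = A ** diagm d ** transpose A"

definition yvec :: "real^'m^'n \<Rightarrow> real^'m \<Rightarrow> real^'m \<Rightarrow> real^'m \<Rightarrow> real^'n" where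
  "yvec A u d l = matrix_inv (Bmat A d) *v (A *v (diagm d *v rvec u l))"

definition tvec :: "real^'m^'n \<Rightarrow> real^'m \<Rightarrow> real^'m \<Rightarrow> real^'m \<Rightarrow> real^'m" where
  "tvec A u d l = transpose A *v yvec A u d l - rvec u l"

definition fval :: "real^'m^'n \<Rightarrow> real^'m \<Rightarrow> real^'m \<Rightarrow> real^'m \<Rightarrow> real" where
  "fval A u d l = vvec u l \<bullet> (diagm d *v vvec u l) - tvec A u d l \<bullet> (diagm d *v tvec A u d l)"

definition gam :: "real^'m^'n \<Rightarrow> real^'m \<Rightarrow> real^'m \<Rightarrow> real^'m \<Rightarrow> 'm \<Rightarrow> real" where
  "gam A u d l i = sqrt (fval A u d l * (column i A \<bullet> (matrix_inv (Bmat A d) *v column i A)))"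

definition cert_lb_constraint :: "real^'m^'n \<Rightarrow> real^'m \<Rightarrow> 'm \<Rightarrow> real \<Rightarrow> real^'m \<Rightarrow> bool" where
  "cert_lb_constraint A u i li lam \<longleftrightarrow>
     A *v lam = - column i A \<and> (\<forall>j. 0 \<le> lam $ j) \<and> - (lam \<bullet> u) \<ge> li"

definition cert_lb :: "real^'m^'n \<Rightarrow> real^'m \<Rightarrow> real^'m \<Rightarrow> real^'m^'m \<Rightarrow> bool" where
  "cert_lb A u l Lam \<longleftrightarrow>
     A ** Lam = - A \<and> (\<forall>j k. 0 \<le> Lam $ j $ k) \<and>
     (\<forall>j. - ((transpose Lam *v u) $ j) \<ge> l $ j)"

end

theory Submission
  imports Defs
begin

text \<open>
  With \<open>D = diag d\<close>, \<open>s = A\<^sup>T B\<^sup>-\<^sup>1 a\<^sub>i\<close> and \<open>z = \<gamma> t - s\<close> the vector \<open>\<lambda>\<^sub>i = D z\<close>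
  represents \<open>-a\<^sub>i\<close>, because \<open>A D t = 0\<close> and \<open>A D s = a\<^sub>i\<close>. Replacing its negative part
  \<open>w\<close> by \<open>\<Lambda> w\<close> preserves this (as \<open>A \<Lambda> = -A\<close>), makes the certificate nonnegative, and
  costs only the use of \<open>l \<le> -\<Lambda>\<^sup>T u\<close> on that part. Writing \<open>u = r + v\<close>, \<open>l = r - v\<close>,
  the certified value is at least \<open>-\<lambda>\<^sub>i\<^sup>T r - |\<lambda>\<^sub>i|\<^sup>T v\<close>. Since \<open>D t\<close> is orthogonal
  to the range of \<open>A\<^sup>T\<close>, the first term is \<open>\<gamma> t\<^sup>T D t + a\<^sub>i\<^sup>T y\<close>, and
  \<open>z\<^sup>T D z = \<gamma>\<^sup>2 t\<^sup>T D t + s\<^sup>T D s = \<gamma>\<^sup>2 (t\<^sup>T D t + f) = \<gamma>\<^sup>2 v\<^sup>T D v\<close>; so Cauchy--Schwarz in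
  the \<open>D\<close>-inner product bounds the second term by \<open>\<gamma> v\<^sup>T D v\<close>. The total is
  \<open>a\<^sub>i\<^sup>T y - \<gamma> f = a\<^sub>i\<^sup>T y - \<gamma>\<close>.
\<close>

lemma matrix_mul_matrix_inv:
  fixes M :: "'a::semiring_1^'n^'n"
  assumes "invertible M"
  shows "M ** matrix_inv M = mat 1"
  using someI_ex[OF assms[unfolded invertible_def]] unfolding matrix_inv_def by auto

lemma inner_transpose_mult_vec:
  fixes M :: "real^'m^'n"
  shows "(transpose M *v x) \<bullet> y = x \<bullet> (M *v y)"
  by (simp add: dot_lmul_matrix)

lemma diagm_mult_vec: "diagm d *v x = (\<chi> k. d $ k * x $ k)"
  unfolding diagm_def matrix_vector_mult_def vec_eq_iff
  by (simp add: if_distrib[of "\<lambda>c. c * _"] cong: if_cong)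

lemma transpose_diagm: "transpose (diagm d) = diagm d"
  by (simp add: diagm_def transpose_def vec_eq_iff)

lemma inner_diagm: "x \<bullet> (diagm d *v y) = (\<Sum>k\<in>UNIV. d $ k * (x $ k * y $ k))"
  by (simp add: diagm_mult_vec inner_vec_def algebra_simps)

lemma inner_diagm_commute: "(diagm d *v x) \<bullet> y = x \<bullet> (diagm d *v y)"
  by (simp add: diagm_mult_vec inner_vec_def algebra_simps)

lemma inner_diagm_nonneg:
  assumes "\<forall>j. 0 \<le> d $ j"
  shows "0 \<le> x \<bullet> (diagm d *v x)"
  unfolding inner_diagm using assms by (intro sum_nonneg) simp

lemma inner_diagm_eq_0:
  assumes "\<forall>j. 0 < d $ j" and "x \<bullet> (diagm d *v x) = 0"
  shows "x = 0"
proof -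
  have "\<forall>k\<in>UNIV. d $ k * (x $ k * x $ k) = 0"
    using assms by (subst sum_nonneg_eq_0_iff[symmetric]) (auto simp: inner_diagm less_imp_le)
  then show ?thesis
    using assms(1) by (simp add: vec_eq_iff) (metis less_irrefl)
qed

lemma pospart_plus_negpart_diagm:
  assumes "\<forall>j. 0 \<le> d $ j"
  shows "pospart (diagm d *v z) + negpart (diagm d *v z) = (\<chi> k. d $ k * \<bar>z $ k\<bar>)"
proof -
  have "max x 0 + max (- x) 0 = \<bar>x\<bar>" for x :: real
    by auto
  then show ?thesis
    using assms by (simp add: vec_eq_iff pospart_def negpart_def diagm_mult_vec abs_mult)
qed

lemma abs_diagm_inner_le:
  assumes "\<forall>j. 0 \<le> d $ j"
  shows "(pospart (diagm d *v z) + negpart (diagm d *v z)) \<bullet> v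
           \<le> sqrt (z \<bullet> (diagm d *v z)) * sqrt (v \<bullet> (diagm d *v v))"
proof -
  define X where "X = (\<chi> k. sqrt (d $ k) * \<bar>z $ k\<bar>)"
  define Y where "Y = (\<chi> k. sqrt (d $ k) * \<bar>v $ k\<bar>)"
  have abs_d: "\<bar>d $ k\<bar> = d $ k" for k
    using assms by simp
  have "(pospart (diagm d *v z) + negpart (diagm d *v z)) \<bullet> v \<le> X \<bullet> Y"
    unfolding pospart_plus_negpart_diagm[OF assms] inner_vec_def inner_real_def X_def Y_def
  proof (rule sum_mono)
    fix k
    have "v $ k * \<bar>z $ k\<bar> \<le> \<bar>v $ k\<bar> * \<bar>z $ k\<bar>"
      by (simp add: mult_right_mono)
    from mult_left_mono[OF this, of "d $ k"]
    have "d $ k * \<bar>z $ k\<bar> * v $ k \<le> sqrt (d $ k) * \<bar>z $ k\<bar> * (sqrt (d $ k) * \<bar>v $ k\<bar>)"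
      using assms by (simp add: algebra_simps abs_d)
    then show "(\<chi> k. d $ k * \<bar>z $ k\<bar>) $ k * v $ k
        \<le> (\<chi> k. sqrt (d $ k) * \<bar>z $ k\<bar>) $ k * (\<chi> k. sqrt (d $ k) * \<bar>v $ k\<bar>) $ k"
      by simp
  qed
  also have "\<dots> \<le> norm X * norm Y"
    by (rule norm_cauchy_schwarz)
  moreover have "norm X = sqrt (z \<bullet> (diagm d *v z))" and "norm Y = sqrt (v \<bullet> (diagm d *v v))"
    unfolding norm_eq_sqrt_inner X_def Y_def inner_vec_def
    by (simp_all add: diagm_mult_vec algebra_simps abs_d abs_mult_self_eq)
  ultimately show ?thesis
    by simp
qed

lemma Bmat_mult_vec: "Bmat A d *v x = A *v (diagm d *v (transpose A *v x))"
  by (simp add: Bmat_def matrix_vector_mul_assoc matrix_mul_assoc del: transpose_matrix_vector)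

lemma transpose_Bmat: "transpose (Bmat A d) = Bmat A d"
  by (simp add: Bmat_def matrix_transpose_mul transpose_diagm matrix_mul_assoc)

lemma inner_diagm_transpose:
  "(transpose A *v w) \<bullet> (diagm d *v (transpose A *v w)) = w \<bullet> (Bmat A d *v w)"
  by (simp only: inner_transpose_mult_vec Bmat_mult_vec)

lemma invertible_Bmat:
  fixes A :: "real^'m^'n"
  assumes "surj ((*v) A)" and "\<forall>j. 0 < d $ j"
  shows "invertible (Bmat A d)"
proof -
  have "x = 0" if "Bmat A d *v x = 0" for x
  proof -
    have "transpose A *v x = 0"
      using that inner_diagm_eq_0[OF assms(2)] inner_diagm_transpose by (metis inner_zero_right)
    moreover obtain lam where "A *v lam = x"
      using assms(1) by (metis surjD)
    ultimately have "x \<bullet> x = 0"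
      by (metis inner_transpose_mult_vec inner_commute inner_zero_left)
    then show ?thesis
      by simp
  qed
  then show ?thesis
    using matrix_left_invertible_ker invertible_left_inverse by blast
qed

lemma standing_assm_surj:
  assumes "standing_assm A"
  shows "surj ((*v) A)"
  using assms unfolding standing_assm_def by blast

context
  fixes A :: "real^'m^'n" and d :: "real^'m"
  assumes invertible_B: "invertible (Bmat A d)"
begin

lemma Bmat_matrix_inv_mult_vec: "Bmat A d *v (matrix_inv (Bmat A d) *v x) = x"
  by (simp add: matrix_vector_mul_assoc matrix_mul_matrix_inv[OF invertible_B])

lemma Bmat_yvec: "Bmat A d *v yvec A u d l = A *v (diagm d *v rvec u l)"
  by (simp only: yvec_def Bmat_matrix_inv_mult_vec)

lemma A_diagm_tvec: "A *v (diagm d *v tvec A u d l) = 0"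
  using Bmat_yvec[of u l]
  by (simp add: tvec_def matrix_vector_mult_diff_distrib Bmat_mult_vec del: transpose_matrix_vector)

lemma A_diagm_transpose_matrix_inv:
  "A *v (diagm d *v (transpose A *v (matrix_inv (Bmat A d) *v x))) = x"
  by (simp only: Bmat_mult_vec[symmetric] Bmat_matrix_inv_mult_vec)

lemma inner_tvec_diagm_transpose: "tvec A u d l \<bullet> (diagm d *v (transpose A *v w)) = 0"
  by (metis A_diagm_tvec inner_diagm_commute inner_commute inner_transpose_mult_vec inner_zero_right)

lemma inner_tvec_diagm_rvec:
  "tvec A u d l \<bullet> (diagm d *v rvec u l) = - (tvec A u d l \<bullet> (diagm d *v tvec A u d l))"
proof -
  have "rvec u l = transpose A *v yvec A u d l - tvec A u d l"
    by (simp add: tvec_def)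
  then show ?thesis
    by (simp add: matrix_vector_mult_diff_distrib inner_diff_right inner_tvec_diagm_transpose
        del: transpose_matrix_vector)
qed

lemma inner_transpose_matrix_inv_diagm_rvec:
  "(transpose A *v (matrix_inv (Bmat A d) *v x)) \<bullet> (diagm d *v rvec u l) = x \<bullet> yvec A u d l"
proof -
  let ?w = "matrix_inv (Bmat A d) *v x"
  have "(transpose A *v ?w) \<bullet> (diagm d *v rvec u l) = ?w \<bullet> (Bmat A d *v yvec A u d l)"
    by (simp only: inner_transpose_mult_vec Bmat_yvec)
  also have "\<dots> = (Bmat A d *v ?w) \<bullet> yvec A u d l"
    by (metis inner_transpose_mult_vec transpose_Bmat)
  also have "\<dots> = x \<bullet> yvec A u d l"
    by (simp only: Bmat_matrix_inv_mult_vec)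
  finally show ?thesis .
qed

end

lemma pospart_minus_negpart: "pospart w - negpart w = w"
  by (simp add: pospart_def negpart_def vec_eq_iff max_def)

lemma inner_negpart_pospart_split:
  "negpart w \<bullet> l - pospart w \<bullet> u = - (w \<bullet> rvec u l) - (pospart w + negpart w) \<bullet> vvec u l"
proof -
  have ul: "rvec u l + vvec u l = u" "rvec u l - vvec u l = l"
    by (simp_all add: rvec_def vvec_def vec_eq_iff field_simps)
  have "negpart w \<bullet> l - pospart w \<bullet> u
      = negpart w \<bullet> (rvec u l - vvec u l) - pospart w \<bullet> (rvec u l + vvec u l)"
    by (simp only: ul)
  also have "\<dots> = - ((pospart w - negpart w) \<bullet> rvec u l) - (pospart w + negpart w) \<bullet> vvec u l"
    by (simp add: inner_diff_right inner_add_right inner_diff_left inner_add_left)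
  finally show ?thesis
    by (simp only: pospart_minus_negpart)
qed

lemma cert_lb_constraint_combination:
  assumes "cert_lb A u l Lam" and "A *v w = - column i A"
  shows "cert_lb_constraint A u i (negpart w \<bullet> l - pospart w \<bullet> u) (Lam *v negpart w + pospart w)"
proof -
  have ALam: "A ** Lam = - A" and Lam_nonneg: "\<forall>j k. 0 \<le> Lam $ j $ k"
    and l_le: "\<forall>j. l $ j \<le> - ((transpose Lam *v u) $ j)"
    using assms(1) unfolding cert_lb_def by auto
  have "(A ** Lam) *v x = - (A *v x)" for x
    by (simp add: ALam matrix_vector_mult_def vec_eq_iff sum_negf)
  then have "A *v (Lam *v negpart w) = - (A *v negpart w)"
    by (simp only: matrix_vector_mul_assoc)
  then have "A *v (Lam *v negpart w + pospart w) = A *v (pospart w - negpart w)"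
    by (simp add: matrix_vector_right_distrib matrix_vector_mult_diff_distrib)
  then have represents: "A *v (Lam *v negpart w + pospart w) = - column i A"
    by (simp only: pospart_minus_negpart assms(2))
  have nonneg: "0 \<le> (Lam *v negpart w + pospart w) $ j" for j
    using Lam_nonneg by (simp add: matrix_vector_mult_def negpart_def pospart_def sum_nonneg)
  have "negpart w \<bullet> l \<le> negpart w \<bullet> (- (transpose Lam *v u))"
    unfolding inner_vec_def inner_real_def
  proof (rule sum_mono)
    fix k
    show "negpart w $ k * l $ k \<le> negpart w $ k * (- (transpose Lam *v u)) $ k"
      using l_le by (intro mult_left_mono) (auto simp: negpart_def)
  qed
  also have "\<dots> = - ((Lam *v negpart w) \<bullet> u)"
    by (metis inner_minus_right inner_commute inner_transpose_mult_vec transpose_transpose)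
  finally have "negpart w \<bullet> l - pospart w \<bullet> u \<le> - ((Lam *v negpart w + pospart w) \<bullet> u)"
    by (simp add: inner_add_left)
  then show ?thesis
    using represents nonneg unfolding cert_lb_constraint_def by blast
qed

definition lamhat :: "real^'m^'n \<Rightarrow> real^'m \<Rightarrow> real^'m \<Rightarrow> real^'m \<Rightarrow> 'm \<Rightarrow> real^'m" where
  "lamhat A u d l i = gam A u d l i *\<^sub>R (diagm d *v tvec A u d l)
     - diagm d *v (transpose A *v (matrix_inv (Bmat A d) *v column i A))"

lemma A_mult_lamhat:
  assumes "invertible (Bmat A d)"
  shows "A *v lamhat A u d l i = - column i A"
  by (simp add: lamhat_def matrix_vector_mult_diff_distrib matrix_vector_mult_scaleR
      A_diagm_tvec[OF assms] A_diagm_transpose_matrix_inv[OF assms] del: transpose_matrix_vector)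

lemma lamhat_value_bound:
  assumes "invertible (Bmat A d)" and d_pos: "\<forall>j. 0 \<le> d $ j" and f_one: "fval A u d l = 1"
  shows "column i A \<bullet> yvec A u d l - gam A u d l i
           \<le> negpart (lamhat A u d l i) \<bullet> l - pospart (lamhat A u d l i) \<bullet> u"
proof -
  define D where "D = diagm d"
  define t where "t = tvec A u d l"
  define v where "v = vvec u l"
  define s where "s = transpose A *v (matrix_inv (Bmat A d) *v column i A)"
  define g where "g = gam A u d l i"
  define z where "z = g *\<^sub>R t - s"
  have lamhat: "lamhat A u d l i = D *v z"
    by (simp add: lamhat_def z_def D_def t_def s_def g_def matrix_vector_mult_diff_distrib
        matrix_vector_mult_scaleR del: transpose_matrix_vector)
  have sDs: "s \<bullet> (D *v s) = column i A \<bullet> (matrix_inv (Bmat A d) *v column i A)"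
    unfolding s_def D_def inner_diagm_transpose
    by (simp add: matrix_vector_mul_assoc matrix_mul_matrix_inv[OF assms(1)] inner_commute)
  have g_nonneg: "0 \<le> g" and g_sq: "g * g = s \<bullet> (D *v s)"
    using inner_diagm_nonneg[OF d_pos, of s] by (simp_all add: g_def gam_def f_one D_def flip: sDs)
  have tDs: "t \<bullet> (D *v s) = 0"
    unfolding t_def D_def s_def by (rule inner_tvec_diagm_transpose[OF assms(1)])
  have vDv: "v \<bullet> (D *v v) = t \<bullet> (D *v t) + 1"
    using f_one by (simp add: fval_def D_def v_def t_def)
  have "z \<bullet> (D *v z) = g * g * (t \<bullet> (D *v t)) - 2 * g * (t \<bullet> (D *v s)) + s \<bullet> (D *v s)"
    using inner_diagm_commute[of d t s] inner_commute[of s "D *v t"]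
    by (simp add: z_def D_def matrix_vector_mult_diff_distrib matrix_vector_mult_scaleR
        inner_diff_left inner_diff_right algebra_simps del: transpose_matrix_vector)
  also have "\<dots> = (g * g) * (v \<bullet> (D *v v))"
    by (simp add: tDs g_sq vDv algebra_simps)
  finally have "sqrt (z \<bullet> (D *v z)) * sqrt (v \<bullet> (D *v v)) = g * (v \<bullet> (D *v v))"
    using g_nonneg inner_diagm_nonneg[OF d_pos, of v] by (simp add: D_def real_sqrt_mult)
  then have abs_part: "(pospart (D *v z) + negpart (D *v z)) \<bullet> v \<le> g * (v \<bullet> (D *v v))"
    using abs_diagm_inner_le[OF d_pos, of z v] by (simp add: D_def)
  have "(D *v z) \<bullet> rvec u l = z \<bullet> (D *v rvec u l)"
    by (simp add: D_def inner_diagm_commute)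
  also have "\<dots> = - g * (t \<bullet> (D *v t)) - column i A \<bullet> yvec A u d l"
    by (simp add: z_def inner_diff_left D_def t_def s_def inner_tvec_diagm_rvec[OF assms(1)]
        inner_transpose_matrix_inv_diagm_rvec[OF assms(1)] del: transpose_matrix_vector)
  finally show ?thesis
    using abs_part vDv by (simp add: lamhat inner_negpart_pospart_split v_def algebra_simps flip: g_def)
qed

theorem proposition2:
  fixes A :: "real^'m^'n" and u d l :: "real^'m" and Lam :: "real^'m^'m" and i :: 'm
  assumes "standing_assm A"
    and "\<forall>j. 0 < d $ j"
    and "cert_lb A u l Lam"
    and "fval A u d l = 1"
  defines "Li \<equiv> column i A \<bullet> yvec A u d l - gam A u d l i"
    and "ltil \<equiv> Lam *v negpart (gam A u d l i *\<^sub>R (diagm d *v tvec A u d l)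
                 - diagm d *v (transpose A *v (matrix_inv (Bmat A d) *v column i A)))
               + pospart (gam A u d l i *\<^sub>R (diagm d *v tvec A u d l)
                 - diagm d *v (transpose A *v (matrix_inv (Bmat A d) *v column i A)))"
  shows "A *v ltil = - column i A \<and> (\<forall>j. 0 \<le> ltil $ j) \<and> - (ltil \<bullet> u) \<ge> Li"
proof -
  have B_inv: "invertible (Bmat A d)"
    using invertible_Bmat[OF standing_assm_surj[OF assms(1)] assms(2)] .
  have ltil: "ltil = Lam *v negpart (lamhat A u d l i) + pospart (lamhat A u d l i)"
    by (simp add: ltil_def lamhat_def)
  have "cert_lb_constraint A u i
      (negpart (lamhat A u d l i) \<bullet> l - pospart (lamhat A u d l i) \<bullet> u) ltil"
    unfolding ltil by (rule cert_lb_constraint_combination[OF assms(3) A_mult_lamhat[OF B_inv]])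
  moreover have "Li \<le> negpart (lamhat A u d l i) \<bullet> l - pospart (lamhat A u d l i) \<bullet> u"
    unfolding Li_def using lamhat_value_bound[OF B_inv _ assms(4)] assms(2) by (simp add: less_imp_le)
  ultimately show ?thesis
    unfolding cert_lb_constraint_def by (meson order_trans)
qed

end
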